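(* Let $F:\mathcal{P}(V,A)\to S_2(A)$ be a consular election rule satisfying SPP and SPO, and let $P$ be a profile. If $\{a,b\}$ is the favourite committee of $P_i$ in the range of $F$ for every voter $i\in V$, then $F(P)=\{a,b\}$.
   Context: $V$ is a finite nonempty set of voters, $A$ a finite set of alternatives; a profile $P$ assigns to each voter $i$ a linear order $P_i$ on $A$; $P_i'P_{-i}$ replaces voter $i$'s order by $P_i'$. $S_2(A)$ is the set of 2-element subsets of $A$; a consular election rule is a map $F:\mathcal{P}(V,A)\to S_2(A)$. SPO: for all $P$, $i$, $P_i'$, $\mathrm{best}(P_i,F(P))\succeq_i\mathrm{best}(P_i,F(P_i'P_{-i}))$; SPP: same with $\mathrm{worst}$, where $\mathrm{best}(P_i,W)$, $\mathrm{worst}(P_i,W)$ are the $P_i$-best and $P_i$-worst elements of $W$. For a linear order $L$ on $A$ and $X,Y\in S_2(A)$: $X\succeq^O Y$ iff the $L$-best element of $X$ is weakly $L$-above that of $Y$; $X\succeq^P Y$ iff the $L$-worst element of $X$ is weakly $L$-above that of $Y$. A favourite committee of $L$ in $\mathcal{X}\subseteq S_2(A)$ is an element of $\mathcal{X}$ maximal in $\mathcal{X}$ under both $\succeq^O$ and $\succeq^P$ (for SPO and SPP rules it is unique in the range of $F$). *)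

theory Defs
  imports Main "HOL-Library.FuncSet"
begin

(* Convention: a linear order L on A is a relation with linear_order_on A L;
   (x, y) \<in> L means "x is weakly above (weakly preferred to) y". *)

definition S2 :: "'a set \<Rightarrow> 'a set set" where
  "S2 A = {W. W \<subseteq> A \<and> card W = 2}"

definition profiles :: "'v set \<Rightarrow> 'a set \<Rightarrow> ('v \<Rightarrow> 'a rel) set" where
  "profiles V A = {P. (\<forall>i\<in>V. linear_order_on A (P i)) \<and> (\<forall>i. i \<notin> V \<longrightarrow> P i = undefined)}"

definition consular_rule :: "'v set \<Rightarrow> 'a set \<Rightarrow> (('v \<Rightarrow> 'a rel) \<Rightarrow> 'a set) \<Rightarrow> bool" where
  "consular_rule V A F \<longleftrightarrow> (\<forall>P\<in>profiles V A. F P \<in> S2 A)"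

definition replace :: "('v \<Rightarrow> 'a rel) \<Rightarrow> 'v \<Rightarrow> 'a rel \<Rightarrow> ('v \<Rightarrow> 'a rel)" where
  "replace P i Li = P(i := Li)"

definition best :: "'a rel \<Rightarrow> 'a set \<Rightarrow> 'a" where
  "best L W = (THE x. x \<in> W \<and> (\<forall>y\<in>W. (x, y) \<in> L))"

definition worst :: "'a rel \<Rightarrow> 'a set \<Rightarrow> 'a" where
  "worst L W = (THE x. x \<in> W \<and> (\<forall>y\<in>W. (y, x) \<in> L))"

definition SPO :: "'v set \<Rightarrow> 'a set \<Rightarrow> (('v \<Rightarrow> 'a rel) \<Rightarrow> 'a set) \<Rightarrow> bool" where
  "SPO V A F \<longleftrightarrow> (\<forall>P\<in>profiles V A. \<forall>i\<in>V. \<forall>Li. linear_order_on A Li \<longrightarrow>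
      (best (P i) (F P), best (P i) (F (replace P i Li))) \<in> P i)"

definition SPP :: "'v set \<Rightarrow> 'a set \<Rightarrow> (('v \<Rightarrow> 'a rel) \<Rightarrow> 'a set) \<Rightarrow> bool" where
  "SPP V A F \<longleftrightarrow> (\<forall>P\<in>profiles V A. \<forall>i\<in>V. \<forall>Li. linear_order_on A Li \<longrightarrow>
      (worst (P i) (F P), worst (P i) (F (replace P i Li))) \<in> P i)"

definition geqO :: "'a rel \<Rightarrow> 'a set \<Rightarrow> 'a set \<Rightarrow> bool" where
  "geqO L X Y \<longleftrightarrow> (best L X, best L Y) \<in> L"

definition geqP :: "'a rel \<Rightarrow> 'a set \<Rightarrow> 'a set \<Rightarrow> bool" where
  "geqP L X Y \<longleftrightarrow> (worst L X, worst L Y) \<in> L"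

definition favourite :: "'a rel \<Rightarrow> 'a set set \<Rightarrow> 'a set \<Rightarrow> bool" where
  "favourite L \<X> X \<longleftrightarrow> X \<in> \<X> \<and> (\<forall>Y\<in>\<X>. geqO L X Y \<and> geqP L X Y)"

definition range_rule :: "'v set \<Rightarrow> 'a set \<Rightarrow> (('v \<Rightarrow> 'a rel) \<Rightarrow> 'a set) \<Rightarrow> 'a set set" where
  "range_rule V A F = F ` profiles V A"

end

theory Submission
  imports Defs
begin

text \<open>Each voter i in turn replaces her order in a profile electing {a, b} by P i.
  Strategy-proofness for her true order P i (deviating back to the old order)
  says the new outcome is weakly above {a, b} under both the optimistic and the
  pessimistic comparison; since {a, b} is P i's favourite committee in the range,
  antisymmetry forces equality of best and worst elements, hence of the committees.
  After finitely many replacements the profile is P.\<close>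

lemma best_worst_of_pair:
  assumes L: "linear_order_on A L" and "x \<in> A" "y \<in> A" "x \<noteq> y" "(x, y) \<in> L"
  shows "best L {x, y} = x" and "worst L {x, y} = y"
proof -
  have "(x, x) \<in> L" "(y, y) \<in> L"
    using L assms(2,3) by (auto simp: linear_order_on_def partial_order_on_def
        preorder_on_def refl_on_def)
  moreover have "(y, x) \<notin> L"
    using L assms(4,5) by (auto simp: linear_order_on_def partial_order_on_def antisym_def)
  ultimately show "best L {x, y} = x" and "worst L {x, y} = y"
    unfolding best_def worst_def using assms(4,5) by (auto intro!: the_equality)
qed

lemma S2_eq_best_worst:
  assumes L: "linear_order_on A L" and W: "W \<in> S2 A"
  shows "W = {best L W, worst L W}"
proof -
  from W obtain x y where W: "W = {x, y}" "x \<noteq> y" "x \<in> A" "y \<in> A"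
    by (auto simp: S2_def card_2_iff)
  have "(x, y) \<in> L \<or> (y, x) \<in> L"
    using L W by (auto simp: linear_order_on_def total_on_def)
  then show ?thesis
  proof
    assume "(x, y) \<in> L"
    then show ?thesis using best_worst_of_pair[OF L] W by simp
  next
    assume "(y, x) \<in> L"
    then show ?thesis using best_worst_of_pair[OF L, of y x] W by (simp add: insert_commute)
  qed
qed

lemma S2_eqI_best_worst:
  assumes "linear_order_on A L" and "W1 \<in> S2 A" "W2 \<in> S2 A"
    and "best L W1 = best L W2" "worst L W1 = worst L W2"
  shows "W1 = W2"
  using assms S2_eq_best_worst by metis

lemma favourite_unique:
  assumes L: "linear_order_on A L" and fav: "favourite L \<X> X" and "\<X> \<subseteq> S2 A"
    and Y: "Y \<in> \<X>" and "geqO L Y X" "geqP L Y X"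
  shows "Y = X"
proof (rule S2_eqI_best_worst[OF L])
  have "antisym L" using L by (auto simp: linear_order_on_def partial_order_on_def)
  then show "best L Y = best L X" "worst L Y = worst L X"
    using fav Y assms(5,6) by (auto simp: favourite_def geqO_def geqP_def antisym_def)
  show "Y \<in> S2 A" "X \<in> S2 A" using assms(3) Y fav by (auto simp: favourite_def)
qed

lemma range_rule_subset_S2: "consular_rule V A F \<Longrightarrow> range_rule V A F \<subseteq> S2 A"
  by (auto simp: consular_rule_def range_rule_def)

lemma profiles_update:
  "R \<in> profiles V A \<Longrightarrow> i \<in> V \<Longrightarrow> linear_order_on A L \<Longrightarrow> R(i := L) \<in> profiles V A"
  by (auto simp: profiles_def)

lemma favourite_outcome_update:
  assumes F: "consular_rule V A F" "SPO V A F" "SPP V A F"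
    and R: "R \<in> profiles V A" and i: "i \<in> V" and L: "linear_order_on A L"
    and FR: "F R = X" and fav: "favourite L (range_rule V A F) X"
  shows "F (R(i := L)) = X"
proof (rule favourite_unique[OF L fav range_rule_subset_S2[OF F(1)]])
  have R': "R(i := L) \<in> profiles V A" using profiles_update[OF R i L] .
  then show "F (R(i := L)) \<in> range_rule V A F" by (simp add: range_rule_def)
  have Ri: "linear_order_on A (R i)" using R i by (simp add: profiles_def)
  have undo: "replace (R(i := L)) i (R i) = R" by (simp add: replace_def)
  show "geqO L (F (R(i := L))) X"
    using F(2) R' i Ri FR undo unfolding SPO_def geqO_def by (metis fun_upd_same)
  show "geqP L (F (R(i := L))) X"
    using F(3) R' i Ri FR undo unfolding SPP_def geqP_def by (metis fun_upd_same)
qed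

lemma favourite_outcome_propagates:
  assumes F: "consular_rule V A F" "SPO V A F" "SPP V A F"
    and P: "P \<in> profiles V A" and fav: "\<forall>i\<in>V. favourite (P i) (range_rule V A F) X"
    and D: "finite D" "D \<subseteq> V"
  shows "R \<in> profiles V A \<Longrightarrow> F R = X \<Longrightarrow> \<forall>i. i \<notin> D \<longrightarrow> R i = P i \<Longrightarrow> F P = X"
  using D
proof (induction D arbitrary: R rule: finite_induct)
  case empty
  then have "R = P" by blast
  with empty show ?case by simp
next
  case (insert j D)
  have j: "j \<in> V" and Pj: "linear_order_on A (P j)"
    using insert.prems(4) P by (auto simp: profiles_def)
  show ?case
  proof (rule insert.IH)
    show "R(j := P j) \<in> profiles V A" using profiles_update[OF insert.prems(1) j Pj] .
    show "F (R(j := P j)) = X"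
      using favourite_outcome_update[OF F insert.prems(1) j Pj insert.prems(2)] fav j by blast
    show "\<forall>i. i \<notin> D \<longrightarrow> (R(j := P j)) i = P i" using insert.prems(3) by auto
    show "D \<subseteq> V" using insert.prems(4) by simp
  qed
qed

theorem lemma48:
  fixes V :: "'v set" and A :: "'a set" and F :: "('v \<Rightarrow> 'a rel) \<Rightarrow> 'a set"
    and P :: "'v \<Rightarrow> 'a rel" and a b :: 'a
  assumes "finite V" and "V \<noteq> {}" and "finite A"
    and "consular_rule V A F"
    and "SPP V A F" and "SPO V A F"
    and "P \<in> profiles V A"
    and "\<forall>i\<in>V. favourite (P i) (range_rule V A F) {a, b}"
  shows "F P = {a, b}"
proof -
  obtain i where "i \<in> V" using assms(2) by auto
  then have "{a, b} \<in> range_rule V A F" using assms(8) by (auto simp: favourite_def)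
  then obtain Q where Q: "Q \<in> profiles V A" "F Q = {a, b}" by (auto simp: range_rule_def)
  have "\<forall>j. j \<notin> V \<longrightarrow> Q j = P j" using Q(1) assms(7) by (auto simp: profiles_def)
  then show ?thesis
    using favourite_outcome_propagates[OF assms(4,6,5,7,8) assms(1) order_refl Q] by blast
qed

end
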